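(* Let $\Pi$ be a program with nested expressions, and let $Q$ be a set of atoms that do not have regular occurrences in the heads of the rules of $\Pi$. For every $q\in Q$ let $\mathit{Def}(q)$ be a formula. Then the program $\Pi\cup\{q\leftarrow\mathit{Def}(q): q\in Q\}$ has the same answer sets as the program $\Pi\cup\{q\leftrightarrow\mathit{Def}(q): q\in Q\}$.
   Context: A literal is an atom $a$ or $\neg a$ (classical negation); a set of literals is consistent if it contains no pair $a,\neg a$. Elementary formulas are literals, $\bot$, $\top$; formulas are built from them with $\mathit{not}$, "," (conjunction), ";" (disjunction). A rule with nested expressions is $\mathit{Head}\leftarrow\mathit{Body}$ with formulas; a program is a set of such rules. For consistent $Z$: $Z\models l$ iff $l\in Z$; $Z\models\top$; $Z\not\models\bot$; $Z\models(F,G)$ iff both; $Z\models(F;G)$ iff at least one; $Z\models\mathit{not}\,F$ iff $Z\not\models F$; $Z$ satisfies a program if for every rule $Z\models\mathit{Body}$ implies $Z\models\mathit{Head}$. Reduct: $F^Z=F$ for elementary $F$; $(F,G)^Z=F^Z,G^Z$; $(F;G)^Z=F^Z;G^Z$; $(\mathit{not}\,F)^Z=\bot$ if $Z\models F$, else $\top$; $\Pi^Z$ consists of the rules $\mathit{Head}^Z\leftarrow\mathit{Body}^Z$. $Z$ is an answer set of a $\mathit{not}$-free program if it is a minimal consistent set satisfying it, and of arbitrary $\Pi$ if it is an answer set of $\Pi^Z$. An occurrence of a formula $F$ in a formula or rule is singular if the symbol immediately before it is the classical negation $\neg$, and regular otherwise. $F\leftrightarrow G$ stands for the pair of rules $F\leftarrow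 G$ and $G\leftarrow F$. *)

theory Defs
  imports Main
begin

text \<open>Literals over atoms of type 'a: an atom or its classical negation.\<close>
datatype 'a lit = Pos 'a | Neg 'a

text \<open>Formulas: elementary formulas (literals, bottom, top) closed under
  not, conjunction (,) and disjunction (;).\<close>
datatype 'a form =
    Lit "'a lit"
  | Bot
  | Top
  | NotF "'a form"
  | Conj "'a form" "'a form"
  | Disj "'a form" "'a form"

text \<open>A rule Head <- Body is a pair (Head, Body); a program is a set of rules.\<close>
type_synonym 'a rule = "'a form \<times> 'a form"
type_synonym 'a program = "'a rule set"

definition consistent :: "'a lit set \<Rightarrow> bool" where
  "consistent Z \<longleftrightarrow> \<not> (\<exists>a. Pos a \<in> Z \<and> Neg a \<in> Z)"

fun sat :: "'a lit set \<Rightarrow> 'a form \<Rightarrow> bool" where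
  "sat Z (Lit l) = (l \<in> Z)"
| "sat Z Bot = False"
| "sat Z Top = True"
| "sat Z (NotF F) = (\<not> sat Z F)"
| "sat Z (Conj F G) = (sat Z F \<and> sat Z G)"
| "sat Z (Disj F G) = (sat Z F \<or> sat Z G)"

definition sat_prog :: "'a lit set \<Rightarrow> 'a program \<Rightarrow> bool" where
  "sat_prog Z P \<longleftrightarrow> (\<forall>(H, B) \<in> P. sat Z B \<longrightarrow> sat Z H)"

fun reduct_form :: "'a form \<Rightarrow> 'a lit set \<Rightarrow> 'a form" where
  "reduct_form (Lit l) Z = Lit l"
| "reduct_form Bot Z = Bot"
| "reduct_form Top Z = Top"
| "reduct_form (NotF F) Z = (if sat Z F then Bot else Top)"
| "reduct_form (Conj F G) Z = Conj (reduct_form F Z) (reduct_form G Z)"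
| "reduct_form (Disj F G) Z = Disj (reduct_form F Z) (reduct_form G Z)"

definition reduct :: "'a program \<Rightarrow> 'a lit set \<Rightarrow> 'a program" where
  "reduct P Z = (\<lambda>(H, B). (reduct_form H Z, reduct_form B Z)) ` P"

definition answer_set_nf :: "'a program \<Rightarrow> 'a lit set \<Rightarrow> bool" where
  "answer_set_nf P Z \<longleftrightarrow> consistent Z \<and> sat_prog Z P \<and>
     (\<forall>Z'. Z' \<subset> Z \<longrightarrow> consistent Z' \<longrightarrow> \<not> sat_prog Z' P)"

definition answer_set :: "'a program \<Rightarrow> 'a lit set \<Rightarrow> bool" where
  "answer_set P Z \<longleftrightarrow> answer_set_nf (reduct P Z) Z"

text \<open>Atoms having a regular occurrence in a formula: an atom a occurs regularly
  iff it occurs as the positive literal a (an occurrence inside the literal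
  \<not>a is singular, since it is immediately preceded by classical negation).\<close>
fun reg_atoms :: "'a form \<Rightarrow> 'a set" where
  "reg_atoms (Lit (Pos a)) = {a}"
| "reg_atoms (Lit (Neg a)) = {}"
| "reg_atoms Bot = {}"
| "reg_atoms Top = {}"
| "reg_atoms (NotF F) = reg_atoms F"
| "reg_atoms (Conj F G) = reg_atoms F \<union> reg_atoms G"
| "reg_atoms (Disj F G) = reg_atoms F \<union> reg_atoms G"

end

theory Submission
  imports Defs
begin

text \<open>If Z is an answer set without them and
  q \<in> Z, then Def q must hold in the reduct, since otherwise Z - {q} would still be a model
  of the reduct: q occurs in no head except that of q \<leftarrow> Def q. Conversely, a smaller model Y
  of the reduct without the new rules can be shrunk, by recomputing its Q-part as the least
  fixpoint of the defining rules Def q over Y - Q, to a model of the reduct with them.\<close>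

lemma consistent_subset: "consistent Y \<Longrightarrow> Y' \<subseteq> Y \<Longrightarrow> consistent Y'"
  unfolding consistent_def by blast

lemma sat_reduct_form_mono:
  "Y \<subseteq> Y' \<Longrightarrow> sat Y (reduct_form F Z) \<Longrightarrow> sat Y' (reduct_form F Z)"
  by (induction F) (auto split: if_splits)

lemma sat_reduct_form_cong:
  assumes "\<forall>a \<in> reg_atoms F. Pos a \<in> Y \<longleftrightarrow> Pos a \<in> Y'"
    and "\<forall>a. Neg a \<in> Y \<longleftrightarrow> Neg a \<in> Y'"
  shows "sat Y (reduct_form F Z) = sat Y' (reduct_form F Z)"
  using assms
proof (induction F)
  case (Lit l)
  then show ?case by (cases l) auto
qed auto

lemma reduct_Un: "reduct (P \<union> P') Z = reduct P Z \<union> reduct P' Z"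
  unfolding reduct_def by blast

lemma sat_prog_Un: "sat_prog Y (P \<union> P') \<longleftrightarrow> sat_prog Y P \<and> sat_prog Y P'"
  unfolding sat_prog_def by blast

lemma sat_prog_reduct_iff:
  "sat_prog Y (reduct P Z) \<longleftrightarrow>
     (\<forall>(H, B) \<in> P. sat Y (reduct_form B Z) \<longrightarrow> sat Y (reduct_form H Z))"
  unfolding sat_prog_def reduct_def by auto

lemma sat_prog_reduct_defining_rules:
  "sat_prog Y (reduct {(Lit (Pos q), Def q) | q. q \<in> Q} Z) \<longleftrightarrow>
     (\<forall>q \<in> Q. sat Y (reduct_form (Def q) Z) \<longrightarrow> Pos q \<in> Y)"
  unfolding sat_prog_reduct_iff Setcompr_eq_image by simp

lemma sat_prog_reduct_converse_rules:
  "sat_prog Y (reduct {(Def q, Lit (Pos q)) | q. q \<in> Q} Z) \<longleftrightarrow>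
     (\<forall>q \<in> Q. Pos q \<in> Y \<longrightarrow> sat Y (reduct_form (Def q) Z))"
  unfolding sat_prog_reduct_iff Setcompr_eq_image by simp

lemma answer_set_Un_satisfied:
  assumes "answer_set P Z" and "sat_prog Z (reduct P' Z)"
  shows "answer_set (P \<union> P') Z"
  using assms unfolding answer_set_def answer_set_nf_def reduct_Un sat_prog_Un by blast

lemma answer_set_Un_dropI:
  assumes ans: "answer_set (P \<union> P') Z"
    and shrink: "\<And>Y. Y \<subset> Z \<Longrightarrow> sat_prog Y (reduct P Z) \<Longrightarrow>
                   \<exists>Y' \<subseteq> Y. sat_prog Y' (reduct (P \<union> P') Z)"
  shows "answer_set P Z"
  unfolding answer_set_def answer_set_nf_def
proof (intro conjI allI impI notI)
  show "consistent Z" and "sat_prog Z (reduct P Z)"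
    using ans unfolding answer_set_def answer_set_nf_def reduct_Un sat_prog_Un by simp_all
  fix Y
  assume "Y \<subset> Z" and "consistent Y" and "sat_prog Y (reduct P Z)"
  then obtain Y' where "Y' \<subseteq> Y" and "sat_prog Y' (reduct (P \<union> P') Z)"
    using shrink by blast
  moreover have "Y' \<subset> Z" and "consistent Y'"
    using \<open>Y' \<subseteq> Y\<close> \<open>Y \<subset> Z\<close> \<open>consistent Y\<close> consistent_subset by blast+
  ultimately show False
    using ans unfolding answer_set_def answer_set_nf_def by blast
qed

lemma sat_prog_reduct_remove_head_free:
  assumes heads: "\<forall>(H, B) \<in> P. \<forall>q \<in> Q. q \<notin> reg_atoms H"
    and sat: "sat_prog Y (reduct P Z)"
    and "Y' \<subseteq> Y" and removed: "Y - Y' \<subseteq> Pos ` Q"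
  shows "sat_prog Y' (reduct P Z)"
  unfolding sat_prog_reduct_iff
proof (intro ballI, clarify)
  fix H B
  assume "(H, B) \<in> P" and "sat Y' (reduct_form B Z)"
  then have "sat Y (reduct_form B Z)"
    using \<open>Y' \<subseteq> Y\<close> sat_reduct_form_mono by blast
  then have "sat Y (reduct_form H Z)"
    using bspec[OF sat[unfolded sat_prog_reduct_iff] \<open>(H, B) \<in> P\<close>] by simp
  moreover have "\<forall>a \<in> reg_atoms H. Pos a \<in> Y' \<longleftrightarrow> Pos a \<in> Y"
    using bspec[OF heads \<open>(H, B) \<in> P\<close>] \<open>Y' \<subseteq> Y\<close> removed by auto
  moreover have "\<forall>a. Neg a \<in> Y' \<longleftrightarrow> Neg a \<in> Y"
    using \<open>Y' \<subseteq> Y\<close> removed by auto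
  ultimately show "sat Y' (reduct_form H Z)"
    using sat_reduct_form_cong[of H Y' Y Z] by blast
qed

lemma answer_set_defined_atoms_supported:
  assumes heads: "\<forall>(H, B) \<in> P. \<forall>q \<in> Q. q \<notin> reg_atoms H"
    and ans: "answer_set (P \<union> {(Lit (Pos q), Def q) | q. q \<in> Q}) Z"
  shows "sat_prog Z (reduct {(Def q, Lit (Pos q)) | q. q \<in> Q} Z)"
  unfolding sat_prog_reduct_converse_rules
proof (intro ballI impI, rule ccontr)
  fix q
  assume "q \<in> Q" and "Pos q \<in> Z" and unsupported: "\<not> sat Z (reduct_form (Def q) Z)"
  have "consistent Z" and sat_P: "sat_prog Z (reduct P Z)"
    and sat_Def: "\<forall>q \<in> Q. sat Z (reduct_form (Def q) Z) \<longrightarrow> Pos q \<in> Z"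
    using ans
    unfolding answer_set_def answer_set_nf_def reduct_Un sat_prog_Un sat_prog_reduct_defining_rules
    by simp_all
  let ?Y = "Z - {Pos q}"
  have "sat_prog ?Y (reduct P Z)"
    by (rule sat_prog_reduct_remove_head_free[OF heads sat_P]) (use \<open>q \<in> Q\<close> in auto)
  moreover have "\<forall>q' \<in> Q. sat ?Y (reduct_form (Def q') Z) \<longrightarrow> Pos q' \<in> ?Y"
    using sat_Def unsupported sat_reduct_form_mono[of ?Y Z] by auto
  ultimately have "sat_prog ?Y (reduct (P \<union> {(Lit (Pos q), Def q) | q. q \<in> Q}) Z)"
    unfolding reduct_Un sat_prog_Un sat_prog_reduct_defining_rules by simp
  moreover have "?Y \<subset> Z"
    using \<open>Pos q \<in> Z\<close> by auto
  moreover have "consistent ?Y"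
    using \<open>consistent Z\<close> consistent_subset by blast
  ultimately show False
    using ans unfolding answer_set_def answer_set_nf_def by blast
qed

lemma sat_prog_reduct_completion_subset:
  assumes heads: "\<forall>(H, B) \<in> P. \<forall>q \<in> Q. q \<notin> reg_atoms H"
    and sat: "sat_prog Y (reduct (P \<union> {(Lit (Pos q), Def q) | q. q \<in> Q}) Z)"
  shows "\<exists>Y' \<subseteq> Y. sat_prog Y'
           (reduct (P \<union> {(Lit (Pos q), Def q) | q. q \<in> Q} \<union> {(Def q, Lit (Pos q)) | q. q \<in> Q}) Z)"
proof -
  have sat_P: "sat_prog Y (reduct P Z)"
    and sat_Def: "\<forall>q \<in> Q. sat Y (reduct_form (Def q) Z) \<longrightarrow> Pos q \<in> Y"
    using sat unfolding reduct_Un sat_prog_Un sat_prog_reduct_defining_rules by simp_all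
  define Y\<^sub>0 where "Y\<^sub>0 = Y - Pos ` Q"
  define T where "T S = {q \<in> Q. sat (Y\<^sub>0 \<union> Pos ` S) (reduct_form (Def q) Z)}" for S
  have "mono T"
  proof (rule monoI)
    fix S S' :: "'a set"
    assume "S \<subseteq> S'"
    then have "Y\<^sub>0 \<union> Pos ` S \<subseteq> Y\<^sub>0 \<union> Pos ` S'"
      by blast
    then show "T S \<subseteq> T S'"
      unfolding T_def using sat_reduct_form_mono by blast
  qed
  define S where "S = lfp T"
  have fixpoint: "T S = S"
    unfolding S_def using lfp_fixpoint[OF \<open>mono T\<close>] .
  have "Y\<^sub>0 \<union> Pos ` {q \<in> Q. Pos q \<in> Y} \<subseteq> Y"
    unfolding Y\<^sub>0_def by blast
  then have "T {q \<in> Q. Pos q \<in> Y} \<subseteq> {q \<in> Q. Pos q \<in> Y}"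
    unfolding T_def using sat_Def sat_reduct_form_mono by blast
  then have "S \<subseteq> {q \<in> Q. Pos q \<in> Y}"
    unfolding S_def by (rule lfp_lowerbound)
  define Y' where "Y' = Y\<^sub>0 \<union> Pos ` S"
  have "Y' \<subseteq> Y"
    using \<open>S \<subseteq> {q \<in> Q. Pos q \<in> Y}\<close> unfolding Y'_def Y\<^sub>0_def by blast
  have "sat_prog Y' (reduct P Z)"
    by (rule sat_prog_reduct_remove_head_free[OF heads sat_P \<open>Y' \<subseteq> Y\<close>])
      (auto simp: Y'_def Y\<^sub>0_def)
  moreover have "sat Y' (reduct_form (Def q) Z) \<longleftrightarrow> Pos q \<in> Y'" if "q \<in> Q" for q
  proof -
    have "sat Y' (reduct_form (Def q) Z) \<longleftrightarrow> q \<in> T S"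
      using that unfolding T_def Y'_def by simp
    also have "\<dots> \<longleftrightarrow> Pos q \<in> Y'"
      using that unfolding fixpoint Y'_def Y\<^sub>0_def by auto
    finally show ?thesis .
  qed
  ultimately have "sat_prog Y'
      (reduct (P \<union> {(Lit (Pos q), Def q) | q. q \<in> Q} \<union> {(Def q, Lit (Pos q)) | q. q \<in> Q}) Z)"
    unfolding reduct_Un sat_prog_Un sat_prog_reduct_defining_rules sat_prog_reduct_converse_rules
    by simp
  with \<open>Y' \<subseteq> Y\<close> show ?thesis
    by blast
qed

theorem mainTheorem13:
  fixes P :: "'a program" and Q :: "'a set" and Def :: "'a \<Rightarrow> 'a form"
  assumes "\<forall>(H, B) \<in> P. \<forall>q \<in> Q. q \<notin> reg_atoms H"
  shows "answer_set (P \<union> {(Lit (Pos q), Def q) | q. q \<in> Q}) Z \<longleftrightarrow>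
         answer_set (P \<union> {(Lit (Pos q), Def q) | q. q \<in> Q}
                       \<union> {(Def q, Lit (Pos q)) | q. q \<in> Q}) Z"
proof
  assume "answer_set (P \<union> {(Lit (Pos q), Def q) | q. q \<in> Q}) Z"
  then show "answer_set (P \<union> {(Lit (Pos q), Def q) | q. q \<in> Q}
               \<union> {(Def q, Lit (Pos q)) | q. q \<in> Q}) Z"
    using answer_set_Un_satisfied answer_set_defined_atoms_supported[OF assms] by blast
next
  assume "answer_set (P \<union> {(Lit (Pos q), Def q) | q. q \<in> Q}
            \<union> {(Def q, Lit (Pos q)) | q. q \<in> Q}) Z"
  then show "answer_set (P \<union> {(Lit (Pos q), Def q) | q. q \<in> Q}) Z"
    by (rule answer_set_Un_dropI) (rule sat_prog_reduct_completion_subset[OF assms])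
qed

end
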